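(* For all positive integers $n$ and $k$, \[ |\mathrm{Hom}(P_n,P_k)| \;=\; k\cdot 2^{n-1} \;-\; \sum_{i=0}^{n-2} 2^{\,n-1-i}\sum_{j\in\mathbb Z}\left(\binom{i}{\lceil i/2\rceil - j(k+1)} - \binom{i}{\lfloor (i+k+1)/2\rfloor - j(k+1)}\right). \]
   Context: All graphs are finite, undirected, without loops or multiple edges. For a positive integer $m$, $P_m$ denotes the path with vertex set $[m]=\{1,\dots,m\}$ in which $i$ and $j$ are adjacent iff $|i-j|=1$. A homomorphism $G\to H$ is a map $f:V(G)\to V(H)$ sending adjacent vertices to adjacent vertices; $\mathrm{Hom}(G,H)$ is the set of such maps. Convention: $\binom{a}{b}=0$ if $b<0$ or $b>a$ (so each inner sum over $j$ is finite). *)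

theory Defs
  imports Complex_Main "HOL-Library.FuncSet"
begin

type_synonym 'a graph = "'a set \<times> ('a \<Rightarrow> 'a \<Rightarrow> bool)"

definition verts :: "'a graph \<Rightarrow> 'a set" where "verts G = fst G"
definition adj :: "'a graph \<Rightarrow> 'a \<Rightarrow> 'a \<Rightarrow> bool" where "adj G = snd G"

definition path_graph :: "nat \<Rightarrow> nat graph" where
  "path_graph m = ({1..m}, \<lambda>i j. \<bar>int i - int j\<bar> = 1)"

definition Hom :: "'a graph \<Rightarrow> 'b graph \<Rightarrow> ('a \<Rightarrow> 'b) set" where
  "Hom G H = {f \<in> verts G \<rightarrow>\<^sub>E verts H.
      \<forall>x\<in>verts G. \<forall>y\<in>verts G. adj G x y \<longrightarrow> adj H (f x) (f y)}"

definition binom_int :: "nat \<Rightarrow> int \<Rightarrow> int" where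
  "binom_int a b = (if 0 \<le> b \<and> b \<le> int a then int (a choose nat b) else 0)"

definition sum_Z :: "(int \<Rightarrow> int) \<Rightarrow> int" where
  "sum_Z f = sum f {j. f j \<noteq> 0}"

end

theory Submission
  imports Defs
begin

text \<open>
  Counting homomorphisms \<open>P\<^sub>n \<rightarrow> P\<^sub>k\<close>, i.e. walks of length \<open>n - 1\<close> in the path \<open>P\<^sub>k\<close>.

  Let \<open>A\<close> be the adjacency operator of \<open>P\<^sub>k\<close>, acting on integer functions on \<open>{1..k}\<close>. The number of
  homomorphisms is \<open>W\<^sub>i = \<langle>A\<^sup>i 1, 1\<rangle>\<close> with \<open>i = n - 1\<close>. Since \<open>A\<close> is self-adjoint and
  \<open>A 1 = 2\<cdot>1 - e\<^sub>1 - e\<^sub>k\<close>, one gets \<open>W\<^sub>i\<^sub>+\<^sub>1 = 2 W\<^sub>i - 2 B\<^sub>i\<close>, where \<open>B\<^sub>i\<close> is the number of walks of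
  length \<open>i\<close> ending (equivalently, starting) at vertex 1; solving this recurrence gives the shape
  of the formula. The inner sum over \<open>j\<close> is \<open>B\<^sub>i\<close>: by the reflection principle the walks from vertex 1
  to \<open>v\<close> are counted by differences of binomial rows folded modulo \<open>k + 1\<close>, and summing over \<open>v\<close>
  telescopes.
\<close>

lemma ceiling_half: "ceiling (real_of_int x / 2) = (x + 1) div 2"
proof -
  have "ceiling (real_of_int x / of_int 2) = - (- x div 2)"
    by (rule ceiling_divide_eq_div)
  moreover have "- (- x div 2) = (x + 1) div 2" by presburger
  ultimately show ?thesis by simp
qed

lemma floor_half: "floor (real_of_int x / 2) = x div 2"
  using floor_divide_of_int_eq[of x 2] by simp

lemma sum_telescope_int:
  fixes f :: "int \<Rightarrow> 'a::ab_group_add"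
  assumes "lo - 1 \<le> hi"
  shows "(\<Sum>m\<in>{lo..hi}. f m - f (m + 1)) = f lo - f (hi + 1)"
  using assms
proof (induction hi rule: int_ge_induct)
  case (step hi)
  then have "{lo..hi + 1} = insert (hi + 1) {lo..hi}" by auto
  with step show ?case by simp
qed simp

lemma sum_Z_eq_sum:
  assumes "finite J" and "{j. f j \<noteq> 0} \<subseteq> J"
  shows "sum_Z f = sum f J"
  unfolding sum_Z_def using assms by (auto intro: sum.mono_neutral_left)

lemma sum_Z_reindex:
  assumes "bij g"
  shows "sum_Z (\<lambda>j. f (g j)) = sum_Z f"
proof -
  have "inj_on g {j. f (g j) \<noteq> 0}"
    using assms by (auto simp: bij_def inj_on_def)
  moreover have "g ` {j. f (g j) \<noteq> 0} = {x. f x \<noteq> 0}"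
    using assms by (auto simp: bij_def surj_def)
  ultimately show ?thesis
    unfolding sum_Z_def by (metis (no_types, lifting) sum.reindex_cong)
qed

lemma sum_Z_add:
  assumes "finite {j. f j \<noteq> 0}" and "finite {j. g j \<noteq> 0}"
  shows "sum_Z (\<lambda>j. f j + g j) = sum_Z f + sum_Z g"
proof -
  let ?J = "{j. f j \<noteq> 0} \<union> {j. g j \<noteq> 0}"
  have "sum_Z (\<lambda>j. f j + g j) = sum (\<lambda>j. f j + g j) ?J"
    and "sum_Z f = sum f ?J" and "sum_Z g = sum g ?J"
    by (rule sum_Z_eq_sum; use assms in auto)+
  then show ?thesis by (simp add: sum.distrib)
qed

lemma sum_Z_diff:
  assumes "finite {j. f j \<noteq> 0}" and "finite {j. g j \<noteq> 0}"
  shows "sum_Z (\<lambda>j. f j - g j) = sum_Z f - sum_Z g"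
proof -
  let ?J = "{j. f j \<noteq> 0} \<union> {j. g j \<noteq> 0}"
  have "sum_Z (\<lambda>j. f j - g j) = sum (\<lambda>j. f j - g j) ?J"
    and "sum_Z f = sum f ?J" and "sum_Z g = sum g ?J"
    by (rule sum_Z_eq_sum; use assms in auto)+
  then show ?thesis by (simp add: sum_subtractf)
qed

lemma binom_int_nonzero_range: "binom_int i t \<noteq> 0 \<Longrightarrow> 0 \<le> t \<and> t \<le> int i"
  by (auto simp: binom_int_def split: if_splits)

lemma binom_int_pascal: "binom_int (Suc i) t = binom_int i t + binom_int i (t - 1)"
proof -
  consider "t \<le> 0" | "0 < t \<and> t \<le> int i" | "t = int i + 1" | "t > int i + 1"
    by linarith
  then show ?thesis
  proof cases
    case 2
    then have "nat t = Suc (nat (t - 1))" by linarith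
    with 2 show ?thesis by (simp add: binom_int_def)
  next
    case 3
    then have "nat t = Suc i" and "nat (t - 1) = i" by auto
    with 3 show ?thesis by (simp add: binom_int_def)
  qed (auto simp: binom_int_def)
qed

lemma binom_int_symmetric: "binom_int i (int i - t) = binom_int i t"
proof (cases "0 \<le> t \<and> t \<le> int i")
  case True
  then have "nat (int i - t) = i - nat t" and "nat t \<le> i" by auto
  with True show ?thesis by (simp add: binom_int_def binomial_symmetric[symmetric])
qed (auto simp: binom_int_def)

text \<open>\<open>j \<mapsto> binom_int i (m - j * p)\<close> has finite support when the period \<open>p\<close> is positive,
  so the sums over \<open>\<int>\<close> in the theorem are genuine finite sums.\<close>

lemma finite_binom_int_support:
  assumes "p > 0"
  shows "finite {j. binom_int i (m - j * p) \<noteq> 0}"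
proof (rule finite_subset)
  show "{j. binom_int i (m - j * p) \<noteq> 0} \<subseteq> {-(\<bar>m\<bar> + int i)..\<bar>m\<bar> + int i}"
  proof
    fix j assume "j \<in> {j. binom_int i (m - j * p) \<noteq> 0}"
    then have "\<bar>j * p\<bar> \<le> \<bar>m\<bar> + int i"
      using binom_int_nonzero_range by fastforce
    moreover have "\<bar>j\<bar> \<le> \<bar>j * p\<bar>"
      using assms by (simp add: abs_mult mult_le_cancel_left1)
    ultimately show "j \<in> {-(\<bar>m\<bar> + int i)..\<bar>m\<bar> + int i}" by auto
  qed
qed simp

definition wrapped_binom :: "int \<Rightarrow> nat \<Rightarrow> int \<Rightarrow> int" where
  "wrapped_binom p i m = sum_Z (\<lambda>j. binom_int i (m - j * p))"

lemma wrapped_binom_pascal: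
  assumes "p > 0"
  shows "wrapped_binom p (Suc i) m = wrapped_binom p i m + wrapped_binom p i (m - 1)"
proof -
  have "wrapped_binom p (Suc i) m
      = sum_Z (\<lambda>j. binom_int i (m - j * p) + binom_int i (m - 1 - j * p))"
    unfolding wrapped_binom_def by (simp add: binom_int_pascal algebra_simps)
  also have "\<dots> = wrapped_binom p i m + wrapped_binom p i (m - 1)"
    unfolding wrapped_binom_def
    by (intro sum_Z_add finite_binom_int_support assms)
  finally show ?thesis .
qed

lemma wrapped_binom_symmetric: "wrapped_binom p i (int i - m) = wrapped_binom p i m"
proof -
  have "wrapped_binom p i (int i - m) = sum_Z (\<lambda>j. binom_int i (m - (- j) * p))"
    unfolding wrapped_binom_def using binom_int_symmetric[of i "m + _ * p"]
    by (simp add: algebra_simps)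
  also have "\<dots> = wrapped_binom p i m"
    unfolding wrapped_binom_def
    by (rule sum_Z_reindex[where f = "\<lambda>j. binom_int i (m - j * p)"])
       (rule bij_betwI[where g = uminus], auto)
  finally show ?thesis .
qed

lemma wrapped_binom_periodic: "wrapped_binom p i (m + p) = wrapped_binom p i m"
proof -
  have "wrapped_binom p i (m + p) = sum_Z (\<lambda>j. binom_int i (m - (j - 1) * p))"
    unfolding wrapped_binom_def by (simp add: algebra_simps)
  also have "\<dots> = wrapped_binom p i m"
    unfolding wrapped_binom_def
    by (rule sum_Z_reindex[where f = "\<lambda>j. binom_int i (m - j * p)"])
       (rule bij_betwI[where g = "\<lambda>j. j + 1"], auto)
  finally show ?thesis .
qed

lemma wrapped_binom_0:
  assumes "0 \<le> m" and "m < p"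
  shows "wrapped_binom p 0 m = (if m = 0 then 1 else 0)"
proof -
  have "{j. binom_int 0 (m - j * p) \<noteq> 0} \<subseteq> {0}"
  proof
    fix j assume "j \<in> {j. binom_int 0 (m - j * p) \<noteq> 0}"
    then have "m = j * p" using binom_int_nonzero_range by fastforce
    with assms have "0 \<le> j * p" and "j * p < 1 * p" by auto
    with assms have "0 \<le> j" and "j < 1"
      by (simp_all add: zero_le_mult_iff mult_less_cancel_right)
    then show "j \<in> {0}" by simp
  qed
  then have "wrapped_binom p 0 m = binom_int 0 m"
    unfolding wrapped_binom_def by (subst sum_Z_eq_sum[of "{0}"]) auto
  then show ?thesis by (simp add: binom_int_def)
qed

text \<open>Consecutive differences of a wrapped row; by symmetry and periodicity they vanish on the
  two "mirrors" \<open>2m = i - 1\<close> and \<open>2m = i + p - 1\<close>, which is the reflection principle.\<close>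

definition wrapped_binom_diff :: "int \<Rightarrow> nat \<Rightarrow> int \<Rightarrow> int" where
  "wrapped_binom_diff p i m = wrapped_binom p i m - wrapped_binom p i (m + 1)"

lemma wrapped_binom_diff_pascal:
  "p > 0 \<Longrightarrow> wrapped_binom_diff p (Suc i) m = wrapped_binom_diff p i m + wrapped_binom_diff p i (m - 1)"
  unfolding wrapped_binom_diff_def by (simp add: wrapped_binom_pascal)

lemma wrapped_binom_diff_vanish_low:
  assumes "2 * m = int i - 1"
  shows "wrapped_binom_diff p i m = 0"
proof -
  have "int i - m = m + 1" using assms by simp
  then show ?thesis
    unfolding wrapped_binom_diff_def using wrapped_binom_symmetric[of p i m] by simp
qed

lemma wrapped_binom_diff_vanish_high:
  assumes "2 * m = int i + p - 1"
  shows "wrapped_binom_diff p i m = 0"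
proof -
  have "wrapped_binom p i (m + 1) = wrapped_binom p i (int i - (m + 1))"
    by (rule wrapped_binom_symmetric[symmetric])
  also have "\<dots> = wrapped_binom p i (int i - (m + 1) + p)"
    by (rule wrapped_binom_periodic[symmetric])
  also have "int i - (m + 1) + p = m" using assms by simp
  finally show ?thesis unfolding wrapped_binom_diff_def by simp
qed

text \<open>Integer functions on the vertex set \<open>{1..k}\<close> of \<open>P\<^sub>k\<close> are modelled as functions \<open>int \<Rightarrow> int\<close>
  vanishing outside it; \<open>adj_op k\<close> is the adjacency operator of \<open>P\<^sub>k\<close> and \<open>pairing k\<close> the
  standard inner product.\<close>

definition supported :: "nat \<Rightarrow> (int \<Rightarrow> int) \<Rightarrow> bool" where
  "supported k h \<longleftrightarrow> (\<forall>v. v \<notin> {1..int k} \<longrightarrow> h v = 0)"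

definition adj_op :: "nat \<Rightarrow> (int \<Rightarrow> int) \<Rightarrow> int \<Rightarrow> int" where
  "adj_op k h v = (if v \<in> {1..int k} then h (v - 1) + h (v + 1) else 0)"

definition pairing :: "nat \<Rightarrow> (int \<Rightarrow> int) \<Rightarrow> (int \<Rightarrow> int) \<Rightarrow> int" where
  "pairing k g h = (\<Sum>v\<in>{1..int k}. g v * h v)"

lemma supported_adj_op: "supported k (adj_op k h)"
  unfolding supported_def adj_op_def by simp

lemma supported_adj_op_pow: "supported k h \<Longrightarrow> supported k ((adj_op k ^^ i) h)"
  by (cases i) (simp_all add: supported_adj_op)

lemma sum_shift_supported:
  assumes "supported k g" and "supported k h"
  shows "(\<Sum>v\<in>{1..int k}. g (v - 1) * h v) = (\<Sum>v\<in>{1..int k}. g v * h (v + 1))"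
proof -
  have g0: "g 0 = 0" and hk: "h (int k + 1) = 0"
    using assms unfolding supported_def by auto
  have "(\<Sum>v\<in>{1..int k}. g (v - 1) * h v) = (\<Sum>v\<in>{0..int k - 1}. g v * h (v + 1))"
    by (rule sum.reindex_bij_witness[where i = "\<lambda>v. v + 1" and j = "\<lambda>v. v - 1"]) auto
  also have "\<dots> = (\<Sum>v\<in>{0..int k}. g v * h (v + 1))"
  proof -
    have "{0..int k} = insert (int k) {0..int k - 1}" by auto
    then show ?thesis by (simp add: hk)
  qed
  also have "\<dots> = (\<Sum>v\<in>{1..int k}. g v * h (v + 1))"
  proof -
    have "{0..int k} = insert 0 {1..int k}" by auto
    then show ?thesis by (simp add: g0)
  qed
  finally show ?thesis .
qed

lemma adj_op_selfadjoint:
  assumes g: "supported k g" and h: "supported k h"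
  shows "pairing k (adj_op k g) h = pairing k g (adj_op k h)"
proof -
  have "pairing k (adj_op k g) h
      = (\<Sum>v\<in>{1..int k}. g (v - 1) * h v) + (\<Sum>v\<in>{1..int k}. g (v + 1) * h v)"
    unfolding pairing_def adj_op_def by (simp add: sum.distrib[symmetric] algebra_simps)
  moreover have "pairing k g (adj_op k h)
      = (\<Sum>v\<in>{1..int k}. g v * h (v - 1)) + (\<Sum>v\<in>{1..int k}. g v * h (v + 1))"
    unfolding pairing_def adj_op_def by (simp add: sum.distrib[symmetric] algebra_simps)
  ultimately show ?thesis
    using sum_shift_supported[OF g h] sum_shift_supported[OF h g] by (simp add: mult.commute)
qed

lemma adj_op_pow_selfadjoint:
  assumes "supported k g" and "supported k h"
  shows "pairing k ((adj_op k ^^ i) g) h = pairing k g ((adj_op k ^^ i) h)"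
  using assms(2)
proof (induction i arbitrary: h)
  case (Suc i)
  have "pairing k ((adj_op k ^^ Suc i) g) h = pairing k ((adj_op k ^^ i) g) (adj_op k h)"
    by (simp add: adj_op_selfadjoint supported_adj_op_pow assms(1) Suc.prems)
  also have "\<dots> = pairing k g ((adj_op k ^^ i) (adj_op k h))"
    by (rule Suc.IH[OF supported_adj_op])
  finally show ?case by (simp add: funpow_Suc_right del: funpow.simps)
qed simp

definition ones :: "nat \<Rightarrow> int \<Rightarrow> int" where
  "ones k v = (if v \<in> {1..int k} then 1 else 0)"

definition delta1 :: "int \<Rightarrow> int" where
  "delta1 v = (if v = 1 then 1 else 0)"

lemma supported_ones: "supported k (ones k)"
  unfolding supported_def ones_def by simp

lemma supported_delta1: "k \<ge> 1 \<Longrightarrow> supported k delta1"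
  unfolding supported_def delta1_def by auto

lemma pairing_ones: "pairing k (ones k) h = (\<Sum>v\<in>{1..int k}. h v)"
  unfolding pairing_def ones_def by simp

lemma pairing_delta1: "k \<ge> 1 \<Longrightarrow> pairing k h delta1 = h 1"
  unfolding pairing_def delta1_def by (simp add: if_distrib cong: if_cong)

text \<open>Applying the adjacency operator doubles the total mass, except for what leaks out
  at the two end vertices: \<open>\<langle>A h, 1\<rangle> = \<langle>h, A 1\<rangle>\<close> and \<open>A 1 = 2\<cdot>1 - e\<^sub>1 - e\<^sub>k\<close>.\<close>

lemma sum_adj_op:
  assumes "k \<ge> 1" and "supported k h"
  shows "(\<Sum>v\<in>{1..int k}. adj_op k h v) = 2 * (\<Sum>v\<in>{1..int k}. h v) - h 1 - h (int k)"
proof -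
  have ones_image: "adj_op k (ones k) v = 2 - delta1 v - (if v = int k then 1 else 0)"
    if "v \<in> {1..int k}" for v
    using that unfolding adj_op_def ones_def delta1_def by auto
  have "(\<Sum>v\<in>{1..int k}. adj_op k h v) = pairing k h (adj_op k (ones k))"
    using adj_op_selfadjoint[OF assms(2) supported_ones] pairing_ones[of k "adj_op k h"]
    by (simp add: pairing_def mult.commute)
  also have "\<dots> = (\<Sum>v\<in>{1..int k}. 2 * h v - h v * delta1 v - (if v = int k then h v else 0))"
    unfolding pairing_def by (rule sum.cong) (auto simp: ones_image algebra_simps)
  also have "\<dots> = 2 * (\<Sum>v\<in>{1..int k}. h v) - pairing k h delta1 - h (int k)"
    using assms(1) by (simp add: sum_subtractf sum_distrib_left pairing_def)
  finally show ?thesis using pairing_delta1[OF assms(1)] by simp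
qed

text \<open>\<open>walks_ending k i v\<close> counts walks of length \<open>i\<close> in \<open>P\<^sub>k\<close> ending at \<open>v\<close>;
  \<open>walks_from_first k i v\<close> counts those that moreover start at vertex 1.\<close>

definition walks_ending :: "nat \<Rightarrow> nat \<Rightarrow> int \<Rightarrow> int" where
  "walks_ending k i = (adj_op k ^^ i) (ones k)"

definition walks_from_first :: "nat \<Rightarrow> nat \<Rightarrow> int \<Rightarrow> int" where
  "walks_from_first k i = (adj_op k ^^ i) delta1"

lemma walks_ending_0: "walks_ending k 0 = ones k"
  by (simp add: walks_ending_def)

lemma walks_ending_Suc: "walks_ending k (Suc i) = adj_op k (walks_ending k i)"
  by (simp add: walks_ending_def)

lemma walks_from_first_Suc: "walks_from_first k (Suc i) = adj_op k (walks_from_first k i)"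
  by (simp add: walks_from_first_def)

lemma supported_walks_ending: "supported k (walks_ending k i)"
  unfolding walks_ending_def by (rule supported_adj_op_pow[OF supported_ones])

text \<open>The reflection \<open>v \<mapsto> k + 1 - v\<close> is an automorphism of \<open>P\<^sub>k\<close>.\<close>

lemma walks_ending_reflect: "walks_ending k i (int k + 1 - v) = walks_ending k i v"
proof (induction i arbitrary: v)
  case 0
  then show ?case by (auto simp: walks_ending_0 ones_def)
next
  case (Suc i)
  have "walks_ending k i (int k + 1 - v - 1) = walks_ending k i (v + 1)"
    and "walks_ending k i (int k + 1 - v + 1) = walks_ending k i (v - 1)"
    using Suc.IH[of "v + 1"] Suc.IH[of "v - 1"] by (simp_all add: algebra_simps)
  then show ?case unfolding walks_ending_Suc adj_op_def by auto
qed

text \<open>By self-adjointness, walks ending at vertex 1 are equinumerous with walks starting there.\<close>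

lemma walks_ending_at_1: "k \<ge> 1 \<Longrightarrow> walks_ending k i 1 = (\<Sum>v\<in>{1..int k}. walks_from_first k i v)"
  using adj_op_pow_selfadjoint[OF supported_ones supported_delta1, of k i]
  by (simp add: walks_ending_def walks_from_first_def pairing_delta1 pairing_ones)

text \<open>The reflection-principle formula for walks from vertex 1 to \<open>v\<close> in \<open>P\<^sub>k\<close>: an alternating
  sum of binomials, written as a difference of wrapped rows with period \<open>k + 1\<close>.  It satisfies
  the same recursion as walk counts and vanishes on the absorbing walls \<open>0\<close> and \<open>k + 1\<close>.\<close>

definition reflection_count :: "nat \<Rightarrow> nat \<Rightarrow> int \<Rightarrow> int" where
  "reflection_count k i v =
     (if even (int i + v - 1) then wrapped_binom_diff (int k + 1) i ((int i + v - 1) div 2) else 0)"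

lemma reflection_count_left_wall: "reflection_count k i 0 = 0"
proof (cases "even (int i - 1)")
  case True
  then obtain m where "int i - 1 = 2 * m" by (rule evenE)
  then show ?thesis by (simp add: reflection_count_def wrapped_binom_diff_vanish_low)
qed (simp add: reflection_count_def)

lemma reflection_count_right_wall: "reflection_count k i (int k + 1) = 0"
proof (cases "even (int i + int k)")
  case True
  then obtain m where "int i + int k = 2 * m" by (rule evenE)
  then show ?thesis by (simp add: reflection_count_def wrapped_binom_diff_vanish_high)
qed (simp add: reflection_count_def)

lemma reflection_count_Suc:
  "reflection_count k (Suc i) v = reflection_count k i (v - 1) + reflection_count k i (v + 1)"
proof (cases "even (int i + v)")
  case True
  then obtain m where m: "int i + v = 2 * m" by (rule evenE)
  have "reflection_count k (Suc i) v = wrapped_binom_diff (int k + 1) (Suc i) m"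
    and "reflection_count k i (v - 1) = wrapped_binom_diff (int k + 1) i (m - 1)"
    and "reflection_count k i (v + 1) = wrapped_binom_diff (int k + 1) i m"
    unfolding reflection_count_def using m True by (simp_all add: algebra_simps)
  then show ?thesis by (simp add: wrapped_binom_diff_pascal)
next
  case False
  then show ?thesis unfolding reflection_count_def by (auto simp: algebra_simps)
qed

lemma walks_from_first_eq:
  assumes "k \<ge> 1"
  shows "walks_from_first k i v = (if v \<in> {1..int k} then reflection_count k i v else 0)"
proof (induction i arbitrary: v)
  case 0
  have "reflection_count k 0 v = delta1 v" if "v \<in> {1..int k}"
  proof (cases "even (v - 1)")
    case True
    then obtain m where m: "v - 1 = 2 * m" by (rule evenE)
    with that have "0 \<le> m" and "m + 1 < int k + 1" by auto
    then have "wrapped_binom_diff (int k + 1) 0 m = (if m = 0 then 1 else 0)"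
      unfolding wrapped_binom_diff_def by (simp add: wrapped_binom_0)
    with m show ?thesis by (auto simp: reflection_count_def delta1_def)
  next
    case False
    then show ?thesis by (auto simp: reflection_count_def delta1_def)
  qed
  with assms show ?case by (auto simp: walks_from_first_def delta1_def)
next
  case (Suc i)
  have "walks_from_first k i (v - 1) = reflection_count k i (v - 1)" if "v \<in> {1..int k}"
    using that Suc.IH[of "v - 1"] reflection_count_left_wall by (cases "v = 1") auto
  moreover have "walks_from_first k i (v + 1) = reflection_count k i (v + 1)" if "v \<in> {1..int k}"
    using that Suc.IH[of "v + 1"] reflection_count_right_wall by (cases "v = int k") auto
  ultimately show ?case
    unfolding walks_from_first_Suc adj_op_def by (auto simp: reflection_count_Suc)
qed

text \<open>Summed over the vertices, the differences telescope to two wrapped rows.\<close>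

lemma sum_reflection_count:
  "(\<Sum>v\<in>{1..int k}. reflection_count k i v) =
     wrapped_binom (int k + 1) i ((int i + 1) div 2) - wrapped_binom (int k + 1) i ((int i + int k + 1) div 2)"
proof -
  let ?lo = "(int i + 1) div 2" and ?hi = "(int i + int k - 1) div 2"
  let ?v = "\<lambda>m. 2 * m - int i + 1"
  have "reflection_count k i v = 0" if "v \<in> {1..int k} - ?v ` {?lo..?hi}" for v
  proof (rule ccontr)
    assume "reflection_count k i v \<noteq> 0"
    then have "even (int i + v - 1)" unfolding reflection_count_def by (auto split: if_splits)
    then obtain m where m: "int i + v - 1 = 2 * m" by (rule evenE)
    with that have "m \<in> {?lo..?hi}" and "v = ?v m" by auto
    with that show False by blast
  qed
  then have "(\<Sum>v\<in>{1..int k}. reflection_count k i v) = (\<Sum>v\<in>?v ` {?lo..?hi}. reflection_count k i v)"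
    by (intro sum.mono_neutral_right) auto
  also have "\<dots> = (\<Sum>m\<in>{?lo..?hi}. reflection_count k i (?v m))"
    by (subst sum.reindex) (auto simp: inj_on_def)
  also have "\<dots> = (\<Sum>m\<in>{?lo..?hi}. wrapped_binom (int k + 1) i m - wrapped_binom (int k + 1) i (m + 1))"
    by (rule sum.cong) (auto simp: reflection_count_def wrapped_binom_diff_def)
  also have "\<dots> = wrapped_binom (int k + 1) i ?lo - wrapped_binom (int k + 1) i (?hi + 1)"
    by (rule sum_telescope_int) auto
  also have "?hi + 1 = (int i + int k + 1) div 2" by simp
  finally show ?thesis .
qed

lemma hom_path_iff:
  "f \<in> Hom (path_graph m) (path_graph k) \<longleftrightarrow>
     f \<in> {1..m} \<rightarrow>\<^sub>E {1..k} \<and>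
     (\<forall>x\<in>{1..m}. \<forall>y\<in>{1..m}. \<bar>int x - int y\<bar> = 1 \<longrightarrow> \<bar>int (f x) - int (f y)\<bar> = 1)"
  by (simp add: Hom_def verts_def adj_def path_graph_def)

lemma hom_path_restrict:
  assumes "f \<in> Hom (path_graph (Suc m)) (path_graph k)"
  shows "restrict f {1..m} \<in> Hom (path_graph m) (path_graph k)"
  using assms unfolding hom_path_iff by (auto simp: PiE_def Pi_def)

lemma hom_path_restrict_extend:
  assumes "f \<in> Hom (path_graph (Suc m)) (path_graph k)"
  shows "(restrict f {1..m})(Suc m := f (Suc m)) = f"
  using assms unfolding hom_path_iff by (auto simp: fun_eq_iff PiE_def extensional_def)

lemma hom_path_extend:
  assumes g: "g \<in> Hom (path_graph (Suc i)) (path_graph k)"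
    and v: "v \<in> {1..k}" and adjacent: "\<bar>int (g (Suc i)) - int v\<bar> = 1"
  shows "g(Suc (Suc i) := v) \<in> Hom (path_graph (Suc (Suc i))) (path_graph k)"
proof -
  let ?f = "g(Suc (Suc i) := v)"
  have "?f \<in> {1..Suc (Suc i)} \<rightarrow>\<^sub>E {1..k}"
    using g v unfolding hom_path_iff by (auto simp: PiE_def Pi_def extensional_def)
  moreover have "\<bar>int (?f x) - int (?f y)\<bar> = 1"
    if x: "x \<in> {1..Suc (Suc i)}" and y: "y \<in> {1..Suc (Suc i)}" and xy: "\<bar>int x - int y\<bar> = 1" for x y
  proof -
    consider "x \<le> Suc i \<and> y \<le> Suc i" | "x = Suc (Suc i) \<and> y = Suc i" | "x = Suc i \<and> y = Suc (Suc i)"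
      using x y xy by fastforce
    then show ?thesis
      using g x y xy adjacent unfolding hom_path_iff by cases auto
  qed
  ultimately show ?thesis unfolding hom_path_iff by blast
qed

definition homs_ending_at :: "nat \<Rightarrow> nat \<Rightarrow> nat \<Rightarrow> (nat \<Rightarrow> nat) set" where
  "homs_ending_at k i v = {f \<in> Hom (path_graph (Suc i)) (path_graph k). f (Suc i) = v}"

lemma finite_homs_ending_at: "finite (homs_ending_at k i v)"
proof (rule finite_subset)
  show "homs_ending_at k i v \<subseteq> {1..Suc i} \<rightarrow>\<^sub>E {1..k}"
    unfolding homs_ending_at_def hom_path_iff by auto
qed (simp add: finite_PiE)

lemma homs_ending_at_outside: "v \<notin> {1..k} \<Longrightarrow> homs_ending_at k i v = {}"
  unfolding homs_ending_at_def hom_path_iff by (auto simp: PiE_def Pi_def)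

lemma homs_ending_at_0: "v \<in> {1..k} \<Longrightarrow> homs_ending_at k 0 v = {\<lambda>x\<in>{1}. v}"
  unfolding homs_ending_at_def hom_path_iff by (auto simp: PiE_def extensional_def)

lemma homs_ending_at_Suc:
  assumes v: "v \<in> {1..k}"
  shows "bij_betw (\<lambda>f. restrict f {1..Suc i})
           (homs_ending_at k (Suc i) v) (homs_ending_at k i (v - 1) \<union> homs_ending_at k i (v + 1))"
proof (rule bij_betw_byWitness[where f' = "\<lambda>g. g(Suc (Suc i) := v)"])
  show "\<forall>f\<in>homs_ending_at k (Suc i) v. (restrict f {1..Suc i})(Suc (Suc i) := v) = f"
    unfolding homs_ending_at_def using hom_path_restrict_extend by blast
  show "\<forall>g\<in>homs_ending_at k i (v - 1) \<union> homs_ending_at k i (v + 1).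
          restrict (g(Suc (Suc i) := v)) {1..Suc i} = g"
    unfolding homs_ending_at_def hom_path_iff by (auto simp: PiE_def extensional_def)
  show "(\<lambda>f. restrict f {1..Suc i}) ` homs_ending_at k (Suc i) v
          \<subseteq> homs_ending_at k i (v - 1) \<union> homs_ending_at k i (v + 1)"
  proof (rule image_subsetI)
    fix f assume f: "f \<in> homs_ending_at k (Suc i) v"
    then have "\<bar>int (f (Suc i)) - int v\<bar> = 1"
      unfolding homs_ending_at_def hom_path_iff by force
    then have "f (Suc i) = v - 1 \<or> f (Suc i) = v + 1" using v by auto
    with f hom_path_restrict
    show "restrict f {1..Suc i} \<in> homs_ending_at k i (v - 1) \<union> homs_ending_at k i (v + 1)"
      unfolding homs_ending_at_def by auto
  qed
  show "(\<lambda>g. g(Suc (Suc i) := v)) ` (homs_ending_at k i (v - 1) \<union> homs_ending_at k i (v + 1))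
          \<subseteq> homs_ending_at k (Suc i) v"
  proof (rule image_subsetI)
    fix g assume g: "g \<in> homs_ending_at k i (v - 1) \<union> homs_ending_at k i (v + 1)"
    then have "g (Suc i) \<in> {1..k}"
      unfolding homs_ending_at_def hom_path_iff by (auto simp: PiE_iff)
    with g have "\<bar>int (g (Suc i)) - int v\<bar> = 1"
      unfolding homs_ending_at_def by auto
    with g v hom_path_extend show "g(Suc (Suc i) := v) \<in> homs_ending_at k (Suc i) v"
      unfolding homs_ending_at_def by auto
  qed
qed

lemma card_homs_ending_at: "int (card (homs_ending_at k i v)) = walks_ending k i (int v)"
proof (induction i arbitrary: v)
  case 0
  then show ?case
    by (cases "v \<in> {1..k}") (auto simp: homs_ending_at_0 homs_ending_at_outside walks_ending_0 ones_def)
next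
  case (Suc i)
  show ?case
  proof (cases "v \<in> {1..k}")
    case True
    have "card (homs_ending_at k (Suc i) v)
        = card (homs_ending_at k i (v - 1) \<union> homs_ending_at k i (v + 1))"
      using bij_betw_same_card[OF homs_ending_at_Suc[OF True]] .
    also have "\<dots> = card (homs_ending_at k i (v - 1)) + card (homs_ending_at k i (v + 1))"
      by (intro card_Un_disjoint finite_homs_ending_at) (auto simp: homs_ending_at_def)
    finally show ?thesis
      using True Suc.IH[of "v - 1"] Suc.IH[of "v + 1"]
      by (auto simp: walks_ending_Suc adj_op_def of_nat_diff add.commute)
  next
    case False
    then show ?thesis by (auto simp: homs_ending_at_outside walks_ending_Suc adj_op_def)
  qed
qed

lemma card_Hom_path:
  "int (card (Hom (path_graph (Suc i)) (path_graph k))) = (\<Sum>v\<in>{1..int k}. walks_ending k i v)"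
proof -
  have "Hom (path_graph (Suc i)) (path_graph k) = (\<Union>v\<in>{1..k}. homs_ending_at k i v)"
    by (rule set_eqI) (auto simp: homs_ending_at_def hom_path_iff PiE_def Pi_def)
  moreover have "card (\<Union>v\<in>{1..k}. homs_ending_at k i v) = (\<Sum>v\<in>{1..k}. card (homs_ending_at k i v))"
    by (rule card_UN_disjoint) (auto simp: finite_homs_ending_at, auto simp: homs_ending_at_def)
  ultimately have "int (card (Hom (path_graph (Suc i)) (path_graph k))) = (\<Sum>v\<in>{1..k}. walks_ending k i (int v))"
    by (simp add: card_homs_ending_at)
  also have "\<dots> = (\<Sum>v\<in>{1..int k}. walks_ending k i v)"
    by (rule sum.reindex_bij_witness[where i = nat and j = int]) auto
  finally show ?thesis .
qed

definition boundary_term :: "nat \<Rightarrow> int \<Rightarrow> int" where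
  "boundary_term k i = sum_Z (\<lambda>j. binom_int (nat i) (ceiling (real_of_int i / 2) - j * (int k + 1))
                  - binom_int (nat i) (floor (real_of_int (i + int k + 1) / 2) - j * (int k + 1)))"

lemma boundary_term_eq_walks_ending:
  assumes "k \<ge> 1"
  shows "boundary_term k (int i) = walks_ending k i 1"
proof -
  have "boundary_term k (int i) =
      wrapped_binom (int k + 1) i ((int i + 1) div 2) - wrapped_binom (int k + 1) i ((int i + int k + 1) div 2)"
    unfolding boundary_term_def wrapped_binom_def ceiling_half floor_half nat_int
    by (intro sum_Z_diff finite_binom_int_support) simp_all
  also have "\<dots> = (\<Sum>v\<in>{1..int k}. walks_from_first k i v)"
    by (simp add: sum_reflection_count[symmetric] walks_from_first_eq[OF assms])
  also have "\<dots> = walks_ending k i 1"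
    by (rule walks_ending_at_1[OF assms, symmetric])
  finally show ?thesis .
qed

text \<open>The total number of walks doubles at each step, minus the walks ending at either end vertex
  (equally many by reflection).\<close>

lemma total_walks_Suc:
  assumes "k \<ge> 1"
  shows "(\<Sum>v\<in>{1..int k}. walks_ending k (Suc i) v) =
           2 * (\<Sum>v\<in>{1..int k}. walks_ending k i v) - 2 * walks_ending k i 1"
  using sum_adj_op[OF assms supported_walks_ending, of i] walks_ending_reflect[of k i 1]
  by (simp add: walks_ending_Suc)

lemma doubling_recurrence_solution:
  fixes a b :: "nat \<Rightarrow> int"
  assumes "\<And>i. a (Suc i) = 2 * a i - 2 * b i"
  shows "a n = 2 ^ n * a 0 - (\<Sum>i<n. 2 ^ (n - i) * b i)"
proof (induction n)
  case (Suc n)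
  have "(\<Sum>i<Suc n. 2 ^ (Suc n - i) * b i) = 2 * (\<Sum>i<n. 2 ^ (n - i) * b i) + 2 * b n"
    by (simp add: sum_distrib_left Suc_diff_le mult.assoc)
  with Suc show ?case by (simp add: assms algebra_simps)
qed simp

lemma total_walks:
  assumes "k \<ge> 1"
  shows "(\<Sum>v\<in>{1..int k}. walks_ending k N v) = int k * 2 ^ N - (\<Sum>i<N. 2 ^ (N - i) * walks_ending k i 1)"
proof -
  have "(\<Sum>v\<in>{1..int k}. walks_ending k N v)
      = 2 ^ N * (\<Sum>v\<in>{1..int k}. walks_ending k 0 v) - (\<Sum>i<N. 2 ^ (N - i) * walks_ending k i 1)"
    by (rule doubling_recurrence_solution[of "\<lambda>i. \<Sum>v\<in>{1..int k}. walks_ending k i v"])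
       (rule total_walks_Suc[OF assms])
  then show ?thesis by (simp add: walks_ending_0 ones_def)
qed

lemma weighted_boundary_terms:
  assumes "k \<ge> 1"
  shows "(\<Sum>i = 0..int (Suc N) - 2. 2 ^ nat (int (Suc N) - 1 - i) * boundary_term k i)
       = (\<Sum>i<N. 2 ^ (N - i) * walks_ending k i 1)"
proof -
  have "(\<Sum>i = 0..int (Suc N) - 2. 2 ^ nat (int (Suc N) - 1 - i) * boundary_term k i)
      = (\<Sum>i<N. 2 ^ (N - i) * boundary_term k (int i))"
    by (rule sum.reindex_bij_witness[where i = int and j = nat]) (auto simp: nat_diff_distrib)
  then show ?thesis by (simp add: boundary_term_eq_walks_ending[OF assms])
qed

theorem theorem2:
  fixes n k :: nat
  assumes "n \<ge> 1" and "k \<ge> 1"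
  shows "int (card (Hom (path_graph n) (path_graph k))) =
    int k * 2 ^ (n - 1)
    - (\<Sum>i = 0..int n - 2. 2 ^ nat (int n - 1 - i) *
        sum_Z (\<lambda>j. binom_int (nat i) (ceiling (real_of_int i / 2) - j * (int k + 1))
                  - binom_int (nat i) (floor (real_of_int (i + int k + 1) / 2) - j * (int k + 1))))"
proof -
  obtain N where n: "n = Suc N" using assms(1) by (cases n) auto
  show ?thesis
    unfolding boundary_term_def[symmetric] n
    using card_Hom_path[of N k] total_walks[OF assms(2), of N] weighted_boundary_terms[OF assms(2), of N]
    by simp
qed

end
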